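(* In the free-group setting described in the context, the map $\pi_Y\circ\pi_f:X_f\to Y$ is not open.
   Context: Let $r\ge2$ and $\Gamma=F_r$ free on $S=\{a,b,a_3,\dots,a_r\}$. $Y$ is the Gromov boundary (infinite reduced words in $S\cup S^{-1}$, $\Gamma$ acting by concatenation and cancellation). For nontrivial $s\in\Gamma$, $y\in Y$ starts with $s$ if $y=sy'$ with the last letter of $s$ not inverse to the first letter of $y'$; $V_s$ is the set of such $y$; $a^\infty$ is the constant word $a$. Let $\{\Gamma_n\}$ be strictly decreasing finite-index normal subgroups with trivial intersection, $Z=\varprojlim\Gamma/\Gamma_n$ with left translation, $\pi_n:Z\to\Gamma/\Gamma_n$, $X=Y\times Z$ with product action, $\pi_Y:X\to Y$ the projection. For $n\ge2$ choose $\gamma_n\in\Gamma_{n-1}\setminus\Gamma_n$; $u_n=a^nba^{-n}b^{-1}$, $D_n=V_{u_n}$, $C_n=\pi_n^{-1}(\gamma_n\Gamma_n)$, $X_+=\bigcup_{n\ge2}D_n\times C_n$, $X_-=X\setminus(X_+\cup\{(a^\infty,e_\Gamma)\})$, $f=\pm1$ on $X_\pm$. $\pi_f:X_f\to X$ is the McMahon extension: the (unique up to conjugacy) minimal continuous action on a compact metrizable space with equivariant continuous surjection whose fibers are single points off $\Gamma(a^\infty,e_\Gamma)$ and two points on it, such that $f\circ\pi_f$ extends continuously to $X_f$. *)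

theory Defs
  imports "HOL-Algebra.Coset" "HOL-Analysis.Analysis"
begin

section \<open>The free group F_r on generators 0,...,r-1 (a = 0, b = 1, a_k = k-1)\<close>

type_synonym letter = "nat \<times> bool"   (* (generator index, True = positive exponent) *)
type_synonym word = "letter list"
type_synonym iword = "nat \<Rightarrow> letter"

definition letter_inv :: "letter \<Rightarrow> letter" where
  "letter_inv l = (fst l, \<not> snd l)"

definition valid_letter :: "nat \<Rightarrow> letter \<Rightarrow> bool" where
  "valid_letter r l \<longleftrightarrow> fst l < r"

definition reduced :: "nat \<Rightarrow> word \<Rightarrow> bool" where
  "reduced r w \<longleftrightarrow> (\<forall>l\<in>set w. valid_letter r l) \<and>
     (\<forall>i. Suc i < length w \<longrightarrow> w ! Suc i \<noteq> letter_inv (w ! i))"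

definition red_cons :: "letter \<Rightarrow> word \<Rightarrow> word" where
  "red_cons x ys = (case ys of [] \<Rightarrow> [x] | y # ys' \<Rightarrow> if y = letter_inv x then ys' else x # ys)"

definition word_mult :: "word \<Rightarrow> word \<Rightarrow> word" where
  "word_mult xs ys = foldr red_cons xs ys"

definition free_group :: "nat \<Rightarrow> word monoid" where
  "free_group r = \<lparr>carrier = {w. reduced r w}, monoid.mult = word_mult, monoid.one = []\<rparr>"

definition gen_a :: letter where "gen_a = (0, True)"
definition gen_b :: letter where "gen_b = (1, True)"

section \<open>The Gromov boundary Y: infinite reduced words\<close>

definition boundary :: "nat \<Rightarrow> iword set" where
  "boundary r = {y. (\<forall>n. valid_letter r (y n)) \<and> (\<forall>n. y (Suc n) \<noteq> letter_inv (y n))}"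

(* cylinder (= Gromov boundary) topology *)
definition boundary_top :: "nat \<Rightarrow> iword topology" where
  "boundary_top r = subtopology (product_topology (\<lambda>_. discrete_topology (UNIV :: letter set)) UNIV)
                                (boundary r)"

definition red_cons_inf :: "letter \<Rightarrow> iword \<Rightarrow> iword" where
  "red_cons_inf x y = (if y 0 = letter_inv x then (\<lambda>n. y (Suc n))
                       else (\<lambda>n. case n of 0 \<Rightarrow> x | Suc m \<Rightarrow> y m))"

definition bd_act :: "word \<Rightarrow> iword \<Rightarrow> iword" where
  "bd_act g y = foldr red_cons_inf g y"

definition concat_inf :: "word \<Rightarrow> iword \<Rightarrow> iword" where
  "concat_inf s y = (\<lambda>n. if n < length s then s ! n else y (n - length s))"

definition Vset :: "nat \<Rightarrow> word \<Rightarrow> iword set" where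
  "Vset r s = {y \<in> boundary r. \<exists>y'\<in>boundary r. y = concat_inf s y' \<and> y' 0 \<noteq> letter_inv (last s)}"

definition a_infty :: iword where "a_infty = (\<lambda>_. gen_a)"

definition u_word :: "nat \<Rightarrow> nat \<Rightarrow> word" where
  "u_word r n = (let G = free_group r in
     [gen_a] [^]\<^bsub>G\<^esub> n \<otimes>\<^bsub>G\<^esub> [gen_b] \<otimes>\<^bsub>G\<^esub> inv\<^bsub>G\<^esub> ([gen_a] [^]\<^bsub>G\<^esub> n)
       \<otimes>\<^bsub>G\<^esub> inv\<^bsub>G\<^esub> [gen_b])"

section \<open>The profinite completion Z = lim Gamma/Gamma_n (n >= 1)\<close>

(* Gamma_n for n >= 1; level 0 is padded with the whole group (Gamma/Gamma = trivial) *)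
definition level :: "nat \<Rightarrow> (nat \<Rightarrow> word set) \<Rightarrow> nat \<Rightarrow> word set" where
  "level r \<Gamma> n = (if n = 0 then carrier (free_group r) else \<Gamma> n)"

definition Zspace :: "nat \<Rightarrow> (nat \<Rightarrow> word set) \<Rightarrow> (nat \<Rightarrow> word set) set" where
  "Zspace r \<Gamma> = {z. \<forall>n. z n \<in> rcosets\<^bsub>free_group r\<^esub> (level r \<Gamma> n) \<and> z (Suc n) \<subseteq> z n}"

definition Ztop :: "nat \<Rightarrow> (nat \<Rightarrow> word set) \<Rightarrow> (nat \<Rightarrow> word set) topology" where
  "Ztop r \<Gamma> = subtopology
     (product_topology (\<lambda>n. discrete_topology (rcosets\<^bsub>free_group r\<^esub> (level r \<Gamma> n))) UNIV)
     (Zspace r \<Gamma>)"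

definition Z_act :: "nat \<Rightarrow> word \<Rightarrow> (nat \<Rightarrow> word set) \<Rightarrow> (nat \<Rightarrow> word set)" where
  "Z_act r g z = (\<lambda>n. g <#\<^bsub>free_group r\<^esub> z n)"

definition Z_unit :: "nat \<Rightarrow> (nat \<Rightarrow> word set) \<Rightarrow> (nat \<Rightarrow> word set)" where
  "Z_unit r \<Gamma> = level r \<Gamma>"

definition Cset :: "nat \<Rightarrow> (nat \<Rightarrow> word set) \<Rightarrow> (nat \<Rightarrow> word) \<Rightarrow> nat \<Rightarrow> (nat \<Rightarrow> word set) set" where
  "Cset r \<Gamma> \<gamma> n = {z \<in> Zspace r \<Gamma>. z n = \<gamma> n <#\<^bsub>free_group r\<^esub> \<Gamma> n}"

section \<open>X = Y x Z and the function f\<close>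

type_synonym xpt = "iword \<times> (nat \<Rightarrow> word set)"

definition Xtop :: "nat \<Rightarrow> (nat \<Rightarrow> word set) \<Rightarrow> xpt topology" where
  "Xtop r \<Gamma> = prod_topology (boundary_top r) (Ztop r \<Gamma>)"

definition X_act :: "nat \<Rightarrow> word \<Rightarrow> xpt \<Rightarrow> xpt" where
  "X_act r g x = (bd_act g (fst x), Z_act r g (snd x))"

definition x0 :: "nat \<Rightarrow> (nat \<Rightarrow> word set) \<Rightarrow> xpt" where
  "x0 r \<Gamma> = (a_infty, Z_unit r \<Gamma>)"

definition Xplus :: "nat \<Rightarrow> (nat \<Rightarrow> word set) \<Rightarrow> (nat \<Rightarrow> word) \<Rightarrow> xpt set" where
  "Xplus r \<Gamma> \<gamma> = (\<Union>n\<in>{2..}. Vset r (u_word r n) \<times> Cset r \<Gamma> \<gamma> n)"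

definition Xminus :: "nat \<Rightarrow> (nat \<Rightarrow> word set) \<Rightarrow> (nat \<Rightarrow> word) \<Rightarrow> xpt set" where
  "Xminus r \<Gamma> \<gamma> = topspace (Xtop r \<Gamma>) - (Xplus r \<Gamma> \<gamma> \<union> {x0 r \<Gamma>})"

(* f = 1 on X_+, -1 on X_-; the value at the excluded point x0 is irrelevant *)
definition fX :: "nat \<Rightarrow> (nat \<Rightarrow> word set) \<Rightarrow> (nat \<Rightarrow> word) \<Rightarrow> xpt \<Rightarrow> real" where
  "fX r \<Gamma> \<gamma> x = (if x \<in> Xplus r \<Gamma> \<gamma> then 1 else if x \<in> Xminus r \<Gamma> \<gamma> then -1 else 0)"

definition x0_orbit :: "nat \<Rightarrow> (nat \<Rightarrow> word set) \<Rightarrow> xpt set" where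
  "x0_orbit r \<Gamma> = (\<lambda>g. X_act r g (x0 r \<Gamma>)) ` carrier (free_group r)"

definition is_action :: "nat \<Rightarrow> 'p topology \<Rightarrow> (word \<Rightarrow> 'p \<Rightarrow> 'p) \<Rightarrow> bool" where
  "is_action r T \<phi> \<longleftrightarrow>
     (\<forall>g\<in>carrier (free_group r). continuous_map T T (\<phi> g)) \<and>
     (\<forall>p\<in>topspace T. \<phi> \<one>\<^bsub>free_group r\<^esub> p = p) \<and>
     (\<forall>g\<in>carrier (free_group r). \<forall>h\<in>carrier (free_group r). \<forall>p\<in>topspace T.
        \<phi> (g \<otimes>\<^bsub>free_group r\<^esub> h) p = \<phi> g (\<phi> h p))"

definition minimal_action :: "nat \<Rightarrow> 'p topology \<Rightarrow> (word \<Rightarrow> 'p \<Rightarrow> 'p) \<Rightarrow> bool" where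
  "minimal_action r T \<phi> \<longleftrightarrow>
     (\<forall>C. closedin T C \<and> C \<noteq> {} \<and> (\<forall>g\<in>carrier (free_group r). \<phi> g ` C \<subseteq> C)
          \<longrightarrow> C = topspace T)"

definition mcmahon_ext :: "nat \<Rightarrow> (nat \<Rightarrow> word set) \<Rightarrow> (nat \<Rightarrow> word)
    \<Rightarrow> 'p topology \<Rightarrow> (word \<Rightarrow> 'p \<Rightarrow> 'p) \<Rightarrow> ('p \<Rightarrow> xpt) \<Rightarrow> bool" where
  "mcmahon_ext r \<Gamma> \<gamma> T \<phi> \<pi> \<longleftrightarrow>
     compact_space T \<and> metrizable_space T \<and>
     is_action r T \<phi> \<and> minimal_action r T \<phi> \<and>
     continuous_map T (Xtop r \<Gamma>) \<pi> \<and> \<pi> ` topspace T = topspace (Xtop r \<Gamma>) \<and>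
     (\<forall>g\<in>carrier (free_group r). \<forall>p\<in>topspace T. \<pi> (\<phi> g p) = X_act r g (\<pi> p)) \<and>
     (\<forall>x\<in>topspace (Xtop r \<Gamma>).
        card {p \<in> topspace T. \<pi> p = x} = (if x \<in> x0_orbit r \<Gamma> then 2 else 1)) \<and>
     (\<exists>F. continuous_map T euclideanreal F \<and>
          (\<forall>p\<in>topspace T. \<pi> p \<noteq> x0 r \<Gamma> \<longrightarrow> F p = fX r \<Gamma> \<gamma> (\<pi> p)))"

end

theory Submission
  imports Defs "HOL-Algebra.Generated_Groups"
begin

(* The points (u_n a^\<infinity>, \<gamma>_n) lie in X_+ and converge to x_0 = (a^\<infinity>, e), so by compactness
   of X_f some point p_0 over x_0 has F p_0 = 1, where F is the continuous extension of f \<circ> \<pi>_f.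
   Then {F > 0} is an open neighbourhood of p_0. If \<pi>_Y \<circ> \<pi>_f were open, its image would be a
   neighbourhood of a^\<infinity>, hence would contain a^N b^\<infinity> for some N. But a^N b^\<infinity> starts with
   no u_n, so every point over it lies in X_-, where F = -1. *)

section \<open>Reduced words\<close>

abbreviation cancellation_free :: "word \<Rightarrow> bool" where
  "cancellation_free \<equiv> successively (\<lambda>x y. y \<noteq> letter_inv x)"

lemma letter_inv_Pair [simp]: "letter_inv (i, e) = (i, \<not> e)"
  by (simp add: letter_inv_def)

lemma letter_inv_letter_inv [simp]: "letter_inv (letter_inv l) = l"
  by (simp add: letter_inv_def)

lemma fst_letter_inv [simp]: "fst (letter_inv l) = fst l"
  by (simp add: letter_inv_def)

lemma letter_inv_neq [simp]: "letter_inv l \<noteq> l" "l \<noteq> letter_inv l"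
  by (auto simp: letter_inv_def prod_eq_iff)

lemma successively_replicate: "P x x \<Longrightarrow> successively P (replicate n x)"
  by (induction n rule: induct_nat_012) auto

lemma reduced_iff_cancellation_free:
  "reduced r w \<longleftrightarrow> (\<forall>l\<in>set w. fst l < r) \<and> cancellation_free w"
  by (auto simp: reduced_def valid_letter_def successively_conv_nth)

lemma carrier_free_group: "carrier (free_group r) = {w. reduced r w}"
  and mult_free_group: "x \<otimes>\<^bsub>free_group r\<^esub> y = word_mult x y"
  and one_free_group: "\<one>\<^bsub>free_group r\<^esub> = []"
  by (simp_all add: free_group_def)

lemma word_mult_eq_append: "cancellation_free (xs @ ys) \<Longrightarrow> word_mult xs ys = xs @ ys"
proof (induction xs)
  case Nil
  then show ?case by (simp add: word_mult_def)
next
  case (Cons l xs)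
  have "word_mult xs ys = xs @ ys"
    using Cons.IH Cons.prems by (auto simp: successively_Cons)
  with Cons.prems show ?case
    by (cases "xs @ ys") (auto simp: word_mult_def red_cons_def)
qed

lemma word_mult_replicate_cancel:
  "word_mult (replicate k (letter_inv l)) (replicate (k + m) l) = replicate m l"
proof (induction k arbitrary: m)
  case 0
  then show ?case by (simp add: word_mult_def)
next
  case (Suc k)
  have "word_mult (replicate (Suc k) (letter_inv l)) (replicate (Suc k + m) l)
      = red_cons (letter_inv l) (word_mult (replicate k (letter_inv l)) (replicate (k + Suc m) l))"
    by (simp add: word_mult_def)
  also have "\<dots> = replicate m l"
    by (simp only: Suc.IH) (simp add: red_cons_def)
  finally show ?case .
qed

lemma free_group_pow_letter: "[l] [^]\<^bsub>free_group r\<^esub> n = replicate n l"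
proof (induction n)
  case 0
  then show ?case by (simp add: one_free_group)
next
  case (Suc n)
  have "replicate n l @ [l] = replicate (Suc n) l"
    by (simp add: replicate_append_same)
  moreover have "cancellation_free (replicate (Suc n) l)"
    by (rule successively_replicate) simp
  ultimately show ?case
    using Suc by (simp add: mult_free_group word_mult_eq_append)
qed

lemma free_group_inv_replicate:
  assumes "group (free_group r)" "fst l < r"
  shows "inv\<^bsub>free_group r\<^esub> (replicate n l) = replicate n (letter_inv l)"
proof (rule group.inv_equality[OF assms(1)])
  show "replicate n (letter_inv l) \<otimes>\<^bsub>free_group r\<^esub> replicate n l = \<one>\<^bsub>free_group r\<^esub>"
    using word_mult_replicate_cancel[of n l 0] by (simp add: mult_free_group one_free_group)
  show "replicate n l \<in> carrier (free_group r)" "replicate n (letter_inv l) \<in> carrier (free_group r)"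
    using assms(2) by (auto simp: carrier_free_group reduced_iff_cancellation_free
        intro!: successively_replicate)
qed

lemma u_word_eq:
  assumes "group (free_group r)" "r \<ge> 2" "n \<ge> 1"
  shows "u_word r n = replicate n gen_a @ gen_b # replicate n (letter_inv gen_a) @ [letter_inv gen_b]"
proof -
  have inv_b: "inv\<^bsub>free_group r\<^esub> [gen_b] = [letter_inv gen_b]"
    using free_group_inv_replicate[OF assms(1), of gen_b 1] assms(2) by (simp add: gen_b_def)
  have inv_an: "inv\<^bsub>free_group r\<^esub> (replicate n gen_a) = replicate n (letter_inv gen_a)"
    using free_group_inv_replicate[OF assms(1)] assms(2) by (simp add: gen_a_def)
  show ?thesis
    unfolding u_word_def Let_def free_group_pow_letter inv_b inv_an mult_free_group
    using assms(3) by (simp add: word_mult_eq_append successively_append_iff successively_Cons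
        successively_replicate gen_a_def gen_b_def)
qed

section \<open>The boundary points u_n a^\<infinity> and a^N b^\<infinity>\<close>

definition no_u_word_prefix :: "nat \<Rightarrow> iword set" where
  "no_u_word_prefix r = {y \<in> boundary r. y \<noteq> a_infty \<and> (\<forall>n\<ge>1. y \<notin> Vset r (u_word r n))}"

definition a_pow_b_infty :: "nat \<Rightarrow> iword" where
  "a_pow_b_infty N = (\<lambda>i. if i < N then gen_a else gen_b)"

lemma a_infty_in_boundary: "r \<ge> 1 \<Longrightarrow> a_infty \<in> boundary r"
  by (simp add: boundary_def a_infty_def valid_letter_def gen_a_def)

lemma a_pow_b_infty_in_boundary: "r \<ge> 2 \<Longrightarrow> a_pow_b_infty N \<in> boundary r"
  by (auto simp: boundary_def a_pow_b_infty_def valid_letter_def gen_a_def gen_b_def)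

lemma concat_inf_in_boundary:
  assumes "reduced r s" "s \<noteq> []" "y \<in> boundary r" "y 0 \<noteq> letter_inv (last s)"
  shows "concat_inf s y \<in> boundary r"
proof -
  have s: "\<forall>l\<in>set s. fst l < r" "\<forall>i. Suc i < length s \<longrightarrow> s ! Suc i \<noteq> letter_inv (s ! i)"
    using assms(1) by (auto simp: reduced_iff_cancellation_free successively_conv_nth)
  have y: "\<forall>n. fst (y n) < r" "\<forall>n. y (Suc n) \<noteq> letter_inv (y n)"
    using assms(3) by (auto simp: boundary_def valid_letter_def)
  have "concat_inf s y (Suc n) \<noteq> letter_inv (concat_inf s y n)" for n
  proof -
    consider "Suc n < length s" | "Suc n = length s" | "Suc n > length s"
      by linarith
    then show ?thesis
    proof cases
      case 2
      then have "s ! n = last s"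
        using assms(2) by (simp add: last_conv_nth flip: 2)
      then show ?thesis
        using 2 assms(4) by (simp add: concat_inf_def)
    qed (use s y in \<open>auto simp: concat_inf_def Suc_diff_le\<close>)
  qed
  moreover have "valid_letter r (concat_inf s y n)" for n
    using s y by (auto simp: concat_inf_def valid_letter_def)
  ultimately show ?thesis
    by (simp add: boundary_def)
qed

lemma Vset_u_word_prefix:
  assumes "group (free_group r)" "r \<ge> 2" "n \<ge> 1" "y \<in> Vset r (u_word r n)"
  shows "\<forall>i<n. y i = gen_a" and "y n = gen_b" and "y (Suc n) = letter_inv gen_a"
proof -
  obtain y' where y: "y = concat_inf (u_word r n) y'"
    using assms(4) by (auto simp: Vset_def)
  show "\<forall>i<n. y i = gen_a" "y n = gen_b" "y (Suc n) = letter_inv gen_a"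
    using assms(3) by (simp_all add: y u_word_eq[OF assms(1-3)] concat_inf_def nth_append)
qed

lemma concat_inf_u_word_in_Vset:
  assumes "group (free_group r)" "r \<ge> 2" "n \<ge> 1"
  shows "concat_inf (u_word r n) a_infty \<in> Vset r (u_word r n)"
proof -
  note u = u_word_eq[OF assms]
  have "reduced r (u_word r n)"
    using assms(2,3) by (simp add: u reduced_iff_cancellation_free successively_append_iff
        successively_Cons successively_replicate gen_a_def gen_b_def)
  moreover have "a_infty 0 \<noteq> letter_inv (last (u_word r n))"
    by (simp add: u a_infty_def gen_a_def gen_b_def)
  moreover have "a_infty \<in> boundary r"
    using assms(2) by (simp add: a_infty_in_boundary)
  ultimately show ?thesis
    unfolding Vset_def using concat_inf_in_boundary[of r "u_word r n" a_infty] by (auto simp: u)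
qed

lemma a_infty_notin_Vset_u_word:
  "group (free_group r) \<Longrightarrow> r \<ge> 2 \<Longrightarrow> n \<ge> 1 \<Longrightarrow> a_infty \<notin> Vset r (u_word r n)"
  using Vset_u_word_prefix(2) by (force simp: a_infty_def gen_a_def gen_b_def)

lemma a_pow_b_infty_notin_Vset_u_word:
  assumes "group (free_group r)" "r \<ge> 2" "n \<ge> 1"
  shows "a_pow_b_infty N \<notin> Vset r (u_word r n)"
proof
  assume y: "a_pow_b_infty N \<in> Vset r (u_word r n)"
  note prefix = Vset_u_word_prefix[OF assms y]
  consider "N < n" | "N > n" | "N = n"
    by linarith
  then show False
    by cases (use prefix in \<open>auto simp: a_pow_b_infty_def gen_a_def gen_b_def\<close>)
qed

section \<open>Convergence in the cylinder topologies\<close>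

lemma limitin_discrete_topology:
  "limitin (discrete_topology U) f l F \<longleftrightarrow> l \<in> U \<and> eventually (\<lambda>x. f x = l) F"
proof
  assume lim: "limitin (discrete_topology U) f l F"
  then have "l \<in> U"
    by (simp add: limitin_def)
  then have "openin (discrete_topology U) {l}"
    by simp
  then have "eventually (\<lambda>x. f x \<in> {l}) F"
    using lim unfolding limitin_def by blast
  with \<open>l \<in> U\<close> show "l \<in> U \<and> eventually (\<lambda>x. f x = l) F"
    by simp
qed (auto simp: limitin_def elim: eventually_mono)

lemma limitin_subtopology_product_discrete:
  assumes "S \<subseteq> (\<Pi>\<^sub>E i\<in>I. D i)"
  shows "limitin (subtopology (product_topology (\<lambda>i. discrete_topology (D i)) I) S) f l F \<longleftrightarrow>
    l \<in> S \<and> eventually (\<lambda>x. f x \<in> S) F \<and> (\<forall>i\<in>I. eventually (\<lambda>x. f x i = l i) F)"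
proof -
  have "eventually (\<lambda>x. f x \<in> (\<Pi>\<^sub>E i\<in>I. D i)) F" if "eventually (\<lambda>x. f x \<in> S) F"
    using that by (rule eventually_mono) (use assms in blast)
  moreover have "l \<in> extensional I \<and> (\<forall>i\<in>I. l i \<in> D i)" if "l \<in> S"
    using that assms by (auto simp: PiE_iff)
  ultimately show ?thesis
    by (auto simp: limitin_subtopology limitin_componentwise limitin_discrete_topology)
qed

lemma limitin_imp_in_closure_of:
  assumes "limitin X f l F" "F \<noteq> bot" "eventually (\<lambda>x. f x \<in> S) F"
  shows "l \<in> X closure_of S"
  unfolding in_closure_of
proof (intro conjI allI impI)
  show "l \<in> topspace X"
    using assms(1) by (simp add: limitin_def)
  fix U
  assume "l \<in> U \<and> openin X U"
  then have "eventually (\<lambda>x. f x \<in> S \<and> f x \<in> U) F"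
    using assms(1,3) by (auto simp: limitin_def intro: eventually_conj)
  then show "\<exists>y. y \<in> S \<and> y \<in> U"
    using eventually_happens'[OF assms(2)] by blast
qed

lemma closure_of_subset_image_level_set:
  assumes "compact_space T" "Hausdorff_space X" "continuous_map T X \<pi>"
    and "continuous_map T euclideanreal F" "S \<subseteq> \<pi> ` topspace T"
    and "\<And>p. p \<in> topspace T \<Longrightarrow> \<pi> p \<in> S \<Longrightarrow> F p = c"
  shows "X closure_of S \<subseteq> \<pi> ` {p \<in> topspace T. F p = c}"
proof (rule closure_of_minimal)
  have "closedin T {p \<in> topspace T. F p = c}"
    using closedin_continuous_map_preimage[OF assms(4), of "{c}"] by simp
  then show "closedin X (\<pi> ` {p \<in> topspace T. F p = c})"
    using assms(1-3) by (meson closedin_compact_space compactin_imp_closedin image_compactin)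
  show "S \<subseteq> \<pi> ` {p \<in> topspace T. F p = c}"
    using assms(5,6) by fastforce
qed

lemma open_map_nbhd_meets_preimage:
  assumes "open_map T Y g" "openin T U" "p \<in> U" "g p \<in> Y closure_of S"
  shows "\<exists>q\<in>U. g q \<in> S"
proof -
  have "openin Y (g ` U)"
    using assms(1,2) by (simp add: open_map_def)
  then show ?thesis
    using assms(3,4) unfolding in_closure_of by blast
qed

lemma topspace_boundary_top: "topspace (boundary_top r) = boundary r"
  by (simp add: boundary_top_def)

lemma Zspace_subset_PiE: "Zspace r \<Gamma> \<subseteq> (\<Pi>\<^sub>E n\<in>UNIV. rcosets\<^bsub>free_group r\<^esub> (level r \<Gamma> n))"
  by (auto simp: Zspace_def)

lemma topspace_Ztop: "topspace (Ztop r \<Gamma>) = Zspace r \<Gamma>"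
  using Zspace_subset_PiE by (simp add: Ztop_def Int_absorb1)

lemma topspace_Xtop: "topspace (Xtop r \<Gamma>) = boundary r \<times> Zspace r \<Gamma>"
  by (simp add: Xtop_def topspace_boundary_top topspace_Ztop)

lemma Hausdorff_Xtop: "Hausdorff_space (Xtop r \<Gamma>)"
  unfolding Xtop_def boundary_top_def Ztop_def
  by (intro Hausdorff_space_prod_topology[THEN iffD2] disjI2 conjI Hausdorff_space_subtopology
      Hausdorff_space_product_topology[THEN iffD2] ballI Hausdorff_space_discrete_topology)

lemma limitin_boundary_top:
  "limitin (boundary_top r) f y F \<longleftrightarrow>
    y \<in> boundary r \<and> eventually (\<lambda>x. f x \<in> boundary r) F \<and> (\<forall>i. eventually (\<lambda>x. f x i = y i) F)"
  unfolding boundary_top_def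
  by (subst limitin_subtopology_product_discrete) auto

lemma limitin_Ztop:
  "limitin (Ztop r \<Gamma>) f z F \<longleftrightarrow>
    z \<in> Zspace r \<Gamma> \<and> eventually (\<lambda>x. f x \<in> Zspace r \<Gamma>) F \<and> (\<forall>m. eventually (\<lambda>x. f x m = z m) F)"
  unfolding Ztop_def by (simp add: limitin_subtopology_product_discrete[OF Zspace_subset_PiE])

lemma limitin_a_pow_b_infty:
  assumes "r \<ge> 2"
  shows "limitin (boundary_top r) a_pow_b_infty a_infty sequentially"
  unfolding limitin_boundary_top
proof (intro conjI allI)
  show "a_infty \<in> boundary r" "\<forall>\<^sub>F N in sequentially. a_pow_b_infty N \<in> boundary r"
    using assms by (simp_all add: a_infty_in_boundary a_pow_b_infty_in_boundary)
  fix i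
  show "\<forall>\<^sub>F N in sequentially. a_pow_b_infty N i = a_infty i"
    using eventually_gt_at_top[of i] by (rule eventually_mono) (simp add: a_pow_b_infty_def a_infty_def)
qed

lemma a_infty_in_closure_of_no_u_word_prefix:
  assumes "group (free_group r)" "r \<ge> 2"
  shows "a_infty \<in> boundary_top r closure_of no_u_word_prefix r"
proof (rule limitin_imp_in_closure_of[OF limitin_a_pow_b_infty[OF assms(2)] trivial_limit_sequentially])
  have "a_pow_b_infty N \<noteq> a_infty" for N
    by (auto simp: a_pow_b_infty_def a_infty_def gen_a_def gen_b_def fun_eq_iff intro: exI[of _ N])
  then show "\<forall>\<^sub>F N in sequentially.
      a_pow_b_infty N \<in> no_u_word_prefix r"
    using assms by (simp add: no_u_word_prefix_def a_pow_b_infty_in_boundary a_pow_b_infty_notin_Vset_u_word)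
qed

lemma limitin_concat_inf_u_word:
  assumes "group (free_group r)" "r \<ge> 2"
  shows "limitin (boundary_top r) (\<lambda>n. concat_inf (u_word r n) a_infty) a_infty sequentially"
  unfolding limitin_boundary_top
proof (intro conjI allI)
  show "a_infty \<in> boundary r"
    using assms(2) by (simp add: a_infty_in_boundary)
  show "\<forall>\<^sub>F n in sequentially. concat_inf (u_word r n) a_infty \<in> boundary r"
    using eventually_ge_at_top[of 1]
    by (rule eventually_mono) (use concat_inf_u_word_in_Vset[OF assms] in \<open>auto simp: Vset_def\<close>)
  fix i
  show "\<forall>\<^sub>F n in sequentially. concat_inf (u_word r n) a_infty i = a_infty i"
    using eventually_gt_at_top[of i]
  proof (rule eventually_mono)
    fix n
    assume "i < n"
    then show "concat_inf (u_word r n) a_infty i = a_infty i"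
      using Vset_u_word_prefix(1)[OF assms _ concat_inf_u_word_in_Vset[OF assms]]
      by (simp add: a_infty_def)
  qed
qed

section \<open>The profinite completion\<close>

context
  fixes r :: nat and \<Gamma> :: "nat \<Rightarrow> word set"
  assumes normal_\<Gamma>: "\<forall>n\<ge>1. \<Gamma> n \<lhd> free_group r"
    and decreasing_\<Gamma>: "\<forall>n\<ge>1. \<Gamma> (Suc n) \<subset> \<Gamma> n"
begin

lemma group_free_group: "group (free_group r)"
  using normal_\<Gamma> by (auto simp: normal_def)

lemma normal_level: "level r \<Gamma> m \<lhd> free_group r"
  using normal_\<Gamma> group.normal_self[OF group_free_group] by (simp add: level_def)

lemma level_antimono:
  assumes "m \<le> k"
  shows "level r \<Gamma> k \<subseteq> level r \<Gamma> m"
proof (rule lift_Suc_antimono_le[OF _ assms])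
  fix n
  show "level r \<Gamma> (Suc n) \<subseteq> level r \<Gamma> n"
  proof (cases "n = 0")
    case True
    then show ?thesis
      using subgroup.subset[OF normal_imp_subgroup[OF normal_level[of 1]]] by (simp add: level_def)
  next
    case False
    then show ?thesis
      using decreasing_\<Gamma>[rule_format, of n] by (simp add: level_def less_imp_le)
  qed
qed

lemma Z_act_Z_unit_in_Zspace:
  assumes "g \<in> carrier (free_group r)"
  shows "Z_act r g (Z_unit r \<Gamma>) \<in> Zspace r \<Gamma>"
proof -
  have "g <#\<^bsub>free_group r\<^esub> level r \<Gamma> m \<in> rcosets\<^bsub>free_group r\<^esub> (level r \<Gamma> m)" for m
  proof -
    interpret normal "level r \<Gamma> m" "free_group r"
      by (rule normal_level)
    show ?thesis
      using assms coset_eq rcosetsI[OF subset assms] by simp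
  qed
  moreover have "g <#\<^bsub>free_group r\<^esub> level r \<Gamma> (Suc m) \<subseteq> g <#\<^bsub>free_group r\<^esub> level r \<Gamma> m" for m
    using level_antimono[of m "Suc m"] by (auto simp: l_coset_def)
  ultimately show ?thesis
    by (simp add: Zspace_def Z_act_def Z_unit_def)
qed

lemma Z_act_Z_unit_eq:
  assumes "g \<in> level r \<Gamma> m"
  shows "Z_act r g (Z_unit r \<Gamma>) m = Z_unit r \<Gamma> m"
proof -
  have "subgroup (level r \<Gamma> m) (free_group r)"
    by (rule normal_imp_subgroup[OF normal_level])
  with assms show ?thesis
    by (simp add: Z_act_def Z_unit_def group.coset_join3[OF group_free_group] subgroup.mem_carrier)
qed

lemma Z_unit_in_Zspace: "Z_unit r \<Gamma> \<in> Zspace r \<Gamma>"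
proof -
  have "Z_act r \<one>\<^bsub>free_group r\<^esub> (Z_unit r \<Gamma>) = Z_unit r \<Gamma>"
    using Z_act_Z_unit_eq subgroup.one_closed[OF normal_imp_subgroup[OF normal_level]] by blast
  then show ?thesis
    using Z_act_Z_unit_in_Zspace[OF monoid.one_closed] group_free_group by (metis group.is_monoid)
qed

lemma limitin_Z_act_Z_unit:
  assumes "\<forall>m. eventually (\<lambda>x. g x \<in> level r \<Gamma> m) F"
  shows "limitin (Ztop r \<Gamma>) (\<lambda>x. Z_act r (g x) (Z_unit r \<Gamma>)) (Z_unit r \<Gamma>) F"
  unfolding limitin_Ztop
proof (intro conjI allI Z_unit_in_Zspace)
  show "\<forall>\<^sub>F x in F. Z_act r (g x) (Z_unit r \<Gamma>) \<in> Zspace r \<Gamma>"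
    using assms[rule_format, of 0]
    by (rule eventually_mono) (simp add: level_def Z_act_Z_unit_in_Zspace)
  show "\<forall>\<^sub>F x in F. Z_act r (g x) (Z_unit r \<Gamma>) m = Z_unit r \<Gamma> m" for m
    using assms[rule_format, of m] by (rule eventually_mono) (rule Z_act_Z_unit_eq)
qed

lemma Z_act_Z_unit_in_Cset:
  assumes "\<gamma> n \<in> carrier (free_group r)" "n \<ge> 1"
  shows "Z_act r (\<gamma> n) (Z_unit r \<Gamma>) \<in> Cset r \<Gamma> \<gamma> n"
  using Z_act_Z_unit_in_Zspace[OF assms(1)] assms(2)
  by (simp add: Cset_def Z_act_def Z_unit_def level_def)

end

section \<open>The space X and the function f\<close>

lemma Xplus_subset_topspace: "Xplus r \<Gamma> \<gamma> \<subseteq> topspace (Xtop r \<Gamma>)"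
  by (auto simp: Xplus_def Vset_def Cset_def topspace_Xtop)

lemma fst_Xplus_neq_a_infty:
  assumes "group (free_group r)" "r \<ge> 2" "x \<in> Xplus r \<Gamma> \<gamma>"
  shows "fst x \<noteq> a_infty"
  using assms a_infty_notin_Vset_u_word[OF assms(1,2)] by (force simp: Xplus_def)

lemma x0_in_closure_of_Xplus:
  assumes "r \<ge> 2" "\<forall>n\<ge>1. \<Gamma> n \<lhd> free_group r" "\<forall>n\<ge>1. \<Gamma> (Suc n) \<subset> \<Gamma> n"
    and "\<forall>n\<ge>2. \<gamma> n \<in> \<Gamma> (n - 1) - \<Gamma> n"
  shows "x0 r \<Gamma> \<in> Xtop r \<Gamma> closure_of Xplus r \<Gamma> \<gamma>"
proof -
  have \<gamma>_level: "\<gamma> n \<in> level r \<Gamma> m" if "n \<ge> 2" "m < n" for n m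
  proof -
    have "\<gamma> n \<in> level r \<Gamma> (n - 1)"
      using assms(4) that(1) by (simp add: level_def)
    moreover have "m \<le> n - 1"
      using that(2) by linarith
    ultimately show ?thesis
      using level_antimono[OF assms(2,3)] by blast
  qed
  have "\<forall>\<^sub>F n in sequentially. \<gamma> n \<in> level r \<Gamma> m" for m
    using eventually_ge_at_top[of "m + 2"] by (rule eventually_mono) (simp add: \<gamma>_level)
  then have "limitin (Ztop r \<Gamma>) (\<lambda>n. Z_act r (\<gamma> n) (Z_unit r \<Gamma>)) (Z_unit r \<Gamma>) sequentially"
    by (intro limitin_Z_act_Z_unit[OF assms(2,3)] allI)
  moreover have "limitin (boundary_top r) (\<lambda>n. concat_inf (u_word r n) a_infty) a_infty sequentially"
    by (rule limitin_concat_inf_u_word[OF group_free_group[OF assms(2,3)] assms(1)])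
  ultimately have "limitin (Xtop r \<Gamma>)
      (\<lambda>n. (concat_inf (u_word r n) a_infty, Z_act r (\<gamma> n) (Z_unit r \<Gamma>))) (x0 r \<Gamma>) sequentially"
    by (simp add: Xtop_def x0_def limitin_pairwise o_def)
  moreover have "\<forall>\<^sub>F n in sequentially.
      (concat_inf (u_word r n) a_infty, Z_act r (\<gamma> n) (Z_unit r \<Gamma>)) \<in> Xplus r \<Gamma> \<gamma>"
  proof (rule eventually_mono[OF eventually_ge_at_top[of 2]])
    fix n :: nat
    assume "n \<ge> 2"
    moreover have "\<gamma> n \<in> carrier (free_group r)"
      using \<gamma>_level[OF \<open>n \<ge> 2\<close>, of 0] \<open>n \<ge> 2\<close> by (simp add: level_def)
    ultimately show "(concat_inf (u_word r n) a_infty, Z_act r (\<gamma> n) (Z_unit r \<Gamma>)) \<in> Xplus r \<Gamma> \<gamma>"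
      using concat_inf_u_word_in_Vset[OF group_free_group[OF assms(2,3)] assms(1)] Z_act_Z_unit_in_Cset[OF assms(2,3)]
      unfolding Xplus_def by fastforce
  qed
  ultimately show ?thesis
    by (rule limitin_imp_in_closure_of[OF _ trivial_limit_sequentially])
qed

lemma fX_Xplus: "x \<in> Xplus r \<Gamma> \<gamma> \<Longrightarrow> fX r \<Gamma> \<gamma> x = 1"
  by (simp add: fX_def)

lemma fX_no_u_word_prefix:
  assumes "x \<in> topspace (Xtop r \<Gamma>)" "fst x \<in> no_u_word_prefix r"
  shows "fX r \<Gamma> \<gamma> x = -1"
proof -
  have "x \<notin> Xplus r \<Gamma> \<gamma>"
    using assms(2) by (auto simp: Xplus_def no_u_word_prefix_def)
  moreover have "fst x \<noteq> fst (x0 r \<Gamma>)"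
    using assms(2) by (simp add: no_u_word_prefix_def x0_def)
  ultimately show ?thesis
    using assms(1) by (auto simp: fX_def Xminus_def)
qed

theorem lemma5p4:
  fixes r :: nat and \<Gamma> :: "nat \<Rightarrow> word set" and \<gamma> :: "nat \<Rightarrow> word"
    and T :: "'p topology" and \<phi> :: "word \<Rightarrow> 'p \<Rightarrow> 'p" and \<pi>f :: "'p \<Rightarrow> xpt"
  assumes "r \<ge> 2"
    and "\<forall>n\<ge>1. normal (\<Gamma> n) (free_group r)"
    and "\<forall>n\<ge>1. finite (rcosets\<^bsub>free_group r\<^esub> (\<Gamma> n))"
    and "\<forall>n\<ge>1. \<Gamma> (Suc n) \<subset> \<Gamma> n"
    and "(\<Inter>n\<in>{1..}. \<Gamma> n) = {\<one>\<^bsub>free_group r\<^esub>}"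
    and "\<forall>n\<ge>2. \<gamma> n \<in> \<Gamma> (n - 1) - \<Gamma> n"
    and "mcmahon_ext r \<Gamma> \<gamma> T \<phi> \<pi>f"
  shows "\<not> open_map T (boundary_top r) (fst \<circ> \<pi>f)"
proof
  assume open_map: "open_map T (boundary_top r) (fst \<circ> \<pi>f)"
  note G = group_free_group[OF assms(2,4)]
  obtain F where cont: "continuous_map T (Xtop r \<Gamma>) \<pi>f" and contF: "continuous_map T euclideanreal F"
    and surj: "\<pi>f ` topspace T = topspace (Xtop r \<Gamma>)" and compact: "compact_space T"
    and F: "\<And>p. p \<in> topspace T \<Longrightarrow> \<pi>f p \<noteq> x0 r \<Gamma> \<Longrightarrow> F p = fX r \<Gamma> \<gamma> (\<pi>f p)"
    using assms(7) unfolding mcmahon_ext_def by blast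
  have not_x0: "fst x \<noteq> a_infty \<Longrightarrow> x \<noteq> x0 r \<Gamma>" for x
    by (metis fst_conv x0_def)
  have F_Xplus: "F p = 1" if "p \<in> topspace T" "\<pi>f p \<in> Xplus r \<Gamma> \<gamma>" for p
    using F[OF that(1) not_x0[OF fst_Xplus_neq_a_infty[OF G assms(1) that(2)]]] fX_Xplus[OF that(2)]
    by simp
  have "Xplus r \<Gamma> \<gamma> \<subseteq> \<pi>f ` topspace T"
    using Xplus_subset_topspace surj by simp
  then have "Xtop r \<Gamma> closure_of Xplus r \<Gamma> \<gamma> \<subseteq> \<pi>f ` {p \<in> topspace T. F p = 1}"
    by (rule closure_of_subset_image_level_set[OF compact Hausdorff_Xtop cont contF _ F_Xplus])
  then have "x0 r \<Gamma> \<in> \<pi>f ` {p \<in> topspace T. F p = 1}"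
    using x0_in_closure_of_Xplus[OF assms(1,2,4,6)] by (rule subsetD)
  then obtain p0 where p0: "x0 r \<Gamma> = \<pi>f p0" "p0 \<in> {p \<in> topspace T. F p = 1}"
    by (rule imageE)
  have "openin T {p \<in> topspace T. F p \<in> {0<..}}"
    by (rule openin_continuous_map_preimage[OF contF]) simp
  moreover have "p0 \<in> {p \<in> topspace T. F p \<in> {0<..}}"
    using p0(2) by simp
  moreover have "(fst \<circ> \<pi>f) p0 \<in> boundary_top r closure_of no_u_word_prefix r"
    unfolding comp_apply p0(1)[symmetric] x0_def fst_conv
    by (rule a_infty_in_closure_of_no_u_word_prefix[OF G assms(1)])
  ultimately have "\<exists>p\<in>{p \<in> topspace T. F p \<in> {0<..}}. (fst \<circ> \<pi>f) p \<in> no_u_word_prefix r"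
    by (rule open_map_nbhd_meets_preimage[OF open_map])
  then obtain p where p: "p \<in> topspace T" "F p > 0" "fst (\<pi>f p) \<in> no_u_word_prefix r"
    by auto
  have "fst (\<pi>f p) \<noteq> a_infty"
    using p(3) by (simp add: no_u_word_prefix_def)
  moreover have "\<pi>f p \<in> topspace (Xtop r \<Gamma>)"
    using p(1) continuous_map_funspace[OF cont] by blast
  ultimately have "F p = -1"
    using F[OF p(1) not_x0] fX_no_u_word_prefix[OF _ p(3)] by simp
  with p(2) show False
    by simp
qed

end
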